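(* Let $\lambda\ge\kappa=\mathrm{cf}(\kappa)>\aleph_0$ and let $k$ be an integer with $k\ge1$. Then the following three cardinals are equal: (a) $e(\lambda,\kappa)$; (b)$_k$ the minimal cardinality of a family $\mathcal F$ such that: (i) each $f\in\mathcal F$ is a partial function from $\lambda$ to $k=\{0,\dots,k-1\}$; (ii) $|\mathrm{Dom}(f)|=\aleph_0$ for $f\in\mathcal F$; (iii) for $f\in\mathcal F$ and $\ell<k$, $f^{-1}(\{\ell\})$ is infinite; (iv) whenever $A_0,\dots,A_{k-1}$ are pairwise disjoint subsets of $\lambda$ each of cardinality $\kappa$, there is $f\in\mathcal F$ such that $f^{-1}(\{\ell\})\cap A_\ell$ is infinite for every $\ell<k$; (c)$_k$ the minimal cardinality of a family $\mathcal F$ satisfying (i), (ii) and: (iii)$^+$ whenever $\langle\alpha_{\varepsilon,\ell}:\varepsilon<\kappa,\ell<k\rangle$ is a sequence of ordinals below $\lambda$ without repetitions, there is $f\in\mathcal F$ such that for infinitely many $\varepsilon<\kappa$, $f(\alpha_{\varepsilon,\ell})=\ell$ for every $\ell<k$ (in particular $\alpha_{\varepsilon,\ell}\in\mathrm{Dom}(f)$).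
   Context: $e(\lambda,\kappa)$ (denoted $\mathrm{ecf}_{\kappa,\aleph_0,\aleph_0}(\lambda)$ in the paper) is the least cardinality of a family $\mathcal P$ of countably infinite subsets of $\lambda$ such that for every $A\subseteq\lambda$ with $|A|=\kappa$ there is $a\in\mathcal P$ with $A\cap a$ infinite. *)

theory Defs
  imports Main "HOL-Library.Countable_Set"
begin

unbundle cardinal_syntax

text \<open>Cardinals lambda and kappa are represented by sets L and K of those cardinalities
  (only cardinalities matter).  Cardinal comparison uses the library's card_of orders.\<close>

definition mincard_is :: "'f set set \<Rightarrow> ('c \<times> 'c) set \<Rightarrow> bool" where
  "mincard_is S r \<longleftrightarrow> (\<exists>F\<in>S. |F| =o r) \<and> (\<forall>F\<in>S. r \<le>o |F| )"

definition ecf_family :: "'a set \<Rightarrow> 'b set \<Rightarrow> 'a set set \<Rightarrow> bool" where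
  "ecf_family L K P \<longleftrightarrow>
     (\<forall>a\<in>P. a \<subseteq> L \<and> countable a \<and> infinite a) \<and>
     (\<forall>A. A \<subseteq> L \<and> |A| =o |K| \<longrightarrow> (\<exists>a\<in>P. infinite (A \<inter> a)))"

definition partial_count_fun :: "'a set \<Rightarrow> nat \<Rightarrow> ('a \<Rightarrow> nat option) \<Rightarrow> bool" where
  "partial_count_fun L k f \<longleftrightarrow>
     dom f \<subseteq> L \<and> ran f \<subseteq> {..<k} \<and> countable (dom f) \<and> infinite (dom f)"

definition b_family :: "'a set \<Rightarrow> 'b set \<Rightarrow> nat \<Rightarrow> ('a \<Rightarrow> nat option) set \<Rightarrow> bool" where
  "b_family L K k F \<longleftrightarrow>
     (\<forall>f\<in>F. partial_count_fun L k f) \<and>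
     (\<forall>f\<in>F. \<forall>l<k. infinite {x. f x = Some l}) \<and>
     (\<forall>A :: nat \<Rightarrow> 'a set.
        (\<forall>l<k. A l \<subseteq> L \<and> |A l| =o |K| ) \<and>
        (\<forall>l<k. \<forall>m<k. l \<noteq> m \<longrightarrow> A l \<inter> A m = {}) \<longrightarrow>
        (\<exists>f\<in>F. \<forall>l<k. infinite ({x. f x = Some l} \<inter> A l)))"

definition c_family :: "'a set \<Rightarrow> 'b set \<Rightarrow> nat \<Rightarrow> ('a \<Rightarrow> nat option) set \<Rightarrow> bool" where
  "c_family L K k F \<longleftrightarrow>
     (\<forall>f\<in>F. partial_count_fun L k f) \<and>
     (\<forall>\<alpha> :: 'b \<Rightarrow> nat \<Rightarrow> 'a.
        (\<forall>e\<in>K. \<forall>l<k. \<alpha> e l \<in> L) \<and>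
        inj_on (\<lambda>(e, l). \<alpha> e l) (K \<times> {..<k}) \<longrightarrow>
        (\<exists>f\<in>F. infinite {e\<in>K. \<forall>l<k. f (\<alpha> e l) = Some l}))"

end

theory Submission
  imports Defs "HOL-Library.Countable_Set_Type"
begin

(* Lower bounds: the domains of a (b)-family form an (a)-family (split a set of size kappa
   into k disjoint sets of size kappa), and a (c)-family becomes a (b)-family once the members
   with a finite colour class are discarded.

   Upper bound: fix an (a)-family P and code k-tuples of elements of L injectively by elements
   of L.  For a in P let D a be the countable set of entries of the tuples coded in a.  Given an
   injective array alpha and kappa many of its rows, some a in P contains the codes of infinitely
   many of them, so the entries of these rows lie in D a; we still need a colouring of D a giving
   entry l colour l, chosen from few candidates per a.  If |L| > 2^aleph0, all (at most 2^aleph0)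
   colourings of D a are affordable, since |P| >= |L|.  Otherwise embed L into P(nat): every row is
   separated by the n-bit prefixes of the images of its entries for some n, and as kappa is
   regular and uncountable, kappa many rows share n and the prefix pattern, which then determines
   a colouring; so countably many colourings per a suffice. *)

lemma uncountable_iff_card_of_nat_less: "uncountable A \<longleftrightarrow> |UNIV :: nat set| <o |A|"
  by (simp add: countable_card_of_nat not_ordLeq_iff_ordLess[OF card_of_Well_order card_of_Well_order])

lemma uncountable_card_of_mono: "uncountable A \<Longrightarrow> |A| \<le>o |B| \<Longrightarrow> uncountable B"
  unfolding countable_card_of_nat using ordLeq_transitive by blast

lemma card_of_image_inj_on: "inj_on f A \<Longrightarrow> |f ` A| =o |A|"
  using card_of_ordIso inj_on_imp_bij_betw ordIso_symmetric by blast

lemma exists_card_of_minimal: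
  assumes "S \<noteq> {}"
  shows "\<exists>F\<in>S. \<forall>G\<in>S. |F| \<le>o |G|"
proof -
  obtain r where "r \<in> card_of ` S" "\<forall>r'\<in>card_of ` S. r \<le>o r'"
    using exists_minim_Card_order[of "card_of ` S"] assms card_of_Card_order by blast
  then show ?thesis by blast
qed

lemma mincard_isI:
  assumes "F \<in> S" and "|F| \<le>o r" and "\<forall>G\<in>S. r \<le>o |G|"
  shows "mincard_is S r"
  unfolding mincard_is_def using assms ordIso_iff_ordLeq by blast

lemma regularCard_pigeonhole:
  fixes key :: "'b \<Rightarrow> 'c::countable"
  assumes reg: "regularCard |K|" and unc: "uncountable K"
  shows "\<exists>c. |{e\<in>K. key e = c}| =o |K|"
proof (rule ccontr)
  assume "\<nexists>c. |{e\<in>K. key e = c}| =o |K|"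
  then have fibres: "|{e\<in>K. key e = c}| <o |K|" for c
    using card_of_mono1[of "{e\<in>K. key e = c}" K] ordLeq_iff_ordLess_or_ordIso by blast
  have "infinite K"
    using unc countable_finite by blast
  then have "Cinfinite |K|"
    by (simp add: cinfinite_def Field_card_of card_of_card_order_on)
  moreover have "|key ` K| <o |K|"
  proof -
    have "|key ` K| \<le>o |UNIV :: nat set|"
      using countable_card_of_nat by (metis countableI_type countable_image)
    then show ?thesis
      using unc uncountable_iff_card_of_nat_less ordLeq_ordLess_trans by blast
  qed
  ultimately have "|\<Union>c\<in>key ` K. {e\<in>K. key e = c}| <o |K|"
    using regularCard_UNION_bound[OF _ reg, of "key ` K" "\<lambda>c. {e\<in>K. key e = c}"] fibres by blast
  moreover have "(\<Union>c\<in>key ` K. {e\<in>K. key e = c}) = K" by auto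
  ultimately show False using ordLess_irreflexive by metis
qed

lemma exists_inj_on_lists_of_length:
  assumes "infinite L"
  shows "\<exists>enc. inj_on enc {xs\<in>lists L. length xs = n} \<and> enc ` {xs\<in>lists L. length xs = n} \<subseteq> L"
proof (induction n)
  case 0
  obtain x0 where "x0 \<in> L" using assms by fastforce
  then show ?case by (intro exI[of _ "\<lambda>_. x0"]) (auto intro: inj_onI)
next
  case (Suc n)
  then obtain enc where enc: "inj_on enc {xs\<in>lists L. length xs = n}"
    "enc ` {xs\<in>lists L. length xs = n} \<subseteq> L" by blast
  obtain p where p: "inj_on p (L \<times> L)" "p ` (L \<times> L) \<subseteq> L"
    using card_of_Times_same_infinite[OF assms] card_of_ordLeq ordIso_iff_ordLeq by metis
  let ?enc = "\<lambda>xs. p (hd xs, enc (tl xs))"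
  have "inj_on ?enc {xs\<in>lists L. length xs = Suc n}"
  proof (rule inj_onI)
    fix xs ys
    assume xs: "xs \<in> {xs\<in>lists L. length xs = Suc n}" and ys: "ys \<in> {xs\<in>lists L. length xs = Suc n}"
      and eq: "?enc xs = ?enc ys"
    obtain x xs' where "xs = x # xs'" "x \<in> L" "xs' \<in> {xs\<in>lists L. length xs = n}"
      using xs by (cases xs) auto
    moreover obtain y ys' where "ys = y # ys'" "y \<in> L" "ys' \<in> {xs\<in>lists L. length xs = n}"
      using ys by (cases ys) auto
    ultimately have "(x, enc xs') = (y, enc ys')"
      using eq enc(2) by (intro inj_onD[OF p(1)]) auto
    with \<open>xs = x # xs'\<close> \<open>ys = y # ys'\<close> show "xs = ys"
      using inj_onD[OF enc(1)] \<open>xs' \<in> _\<close> \<open>ys' \<in> _\<close> by simp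
  qed
  moreover have "?enc ` {xs\<in>lists L. length xs = Suc n} \<subseteq> L"
    using p(2) enc(2) by (force simp: length_Suc_conv)
  ultimately show ?case by blast
qed

lemma card_of_maps_with_countable_dom:
  fixes D :: "'a set"
  assumes "countable D"
  shows "|{f :: 'a \<Rightarrow> 'b::countable option. dom f \<subseteq> D}| \<le>o |UNIV :: nat set set|"
proof -
  have "countable (D \<times> (UNIV :: 'b set))"
    using assms by simp
  then obtain u :: "'a \<times> 'b \<Rightarrow> nat" where u: "inj_on u (D \<times> UNIV)"
    by (auto simp: countable_def)
  have graph_sub: "Map.graph f \<subseteq> D \<times> UNIV" if "dom f \<subseteq> D" for f :: "'a \<Rightarrow> 'b option"
    using that graph_domD by fastforce
  have "inj_on (\<lambda>f. u ` Map.graph f) {f. dom f \<subseteq> D}"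
  proof (rule inj_onI)
    fix f g :: "'a \<Rightarrow> 'b option"
    assume "f \<in> {f. dom f \<subseteq> D}" "g \<in> {f. dom f \<subseteq> D}" "u ` Map.graph f = u ` Map.graph g"
    then have "Map.graph f = Map.graph g"
      using inj_on_image_eq_iff[OF u graph_sub graph_sub] by simp
    then show "f = g"
      by (metis in_graphD in_graphI not_Some_eq ext)
  qed
  then show ?thesis
    using card_of_ordLeq[of _ "UNIV :: nat set set"] by blast
qed

lemma exists_disjoint_copies:
  assumes "infinite K" and "|A| =o |K|"
  obtains B :: "nat \<Rightarrow> 'a set"
  where "\<And>l. B l \<subseteq> A" "\<And>l. |B l| =o |K|" "\<And>l m. l \<noteq> m \<Longrightarrow> B l \<inter> B m = {}"
proof -
  have "|K \<times> (UNIV :: nat set)| =o |K|"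
    using card_of_Times_infinite[OF assms(1)] infinite_iff_card_of_nat assms(1) by auto
  then obtain g where g: "bij_betw g (K \<times> (UNIV :: nat set)) A"
    using assms(2) card_of_ordIso ordIso_symmetric ordIso_transitive by metis
  define B where "B l = g ` (K \<times> {l})" for l
  have "bij_betw (\<lambda>e. g (e, l)) K (B l)" for l
    using g unfolding B_def bij_betw_def inj_on_def by auto
  then have "|B l| =o |K|" for l
    using card_of_ordIso ordIso_symmetric by metis
  moreover have "B l \<subseteq> A" for l
    using g unfolding B_def bij_betw_def by auto
  moreover have "B l \<inter> B m = {}" if "l \<noteq> m" for l m
    using g that unfolding B_def bij_betw_def inj_on_def by auto
  ultimately show thesis using that by metis
qed

lemma exists_inj_array_in_disjoint_sets:
  assumes "\<forall>l<k. |A l| =o |K|" and "\<forall>l<k. \<forall>m<k. l \<noteq> m \<longrightarrow> A l \<inter> A m = {}"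
  shows "\<exists>\<alpha>. (\<forall>e\<in>K. \<forall>l<k. \<alpha> e l \<in> A l) \<and> inj_on (\<lambda>(e, l). \<alpha> e l) (K \<times> {..<k})"
proof -
  have "\<forall>l\<in>{..<k}. \<exists>g. bij_betw g K (A l)"
    using assms(1) card_of_ordIso ordIso_symmetric by blast
  then obtain G where G: "\<And>l. l < k \<Longrightarrow> bij_betw (G l) K (A l)"
    by (metis lessThan_iff)
  define \<alpha> where "\<alpha> e l = G l e" for e l
  have \<alpha>_in: "\<alpha> e l \<in> A l" if "e \<in> K" "l < k" for e l
    using G that unfolding \<alpha>_def bij_betw_def by auto
  have "inj_on (\<lambda>(e, l). \<alpha> e l) (K \<times> {..<k})"
  proof (rule inj_onI, clarify)
    fix e l e' l'
    assume el: "e \<in> K" "l < k" "e' \<in> K" "l' < k" and eq: "\<alpha> e l = \<alpha> e' l'"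
    have "l = l'"
    proof (rule ccontr)
      assume "l \<noteq> l'"
      then have "A l \<inter> A l' = {}"
        using assms(2) el by blast
      moreover have "\<alpha> e l \<in> A l" "\<alpha> e l \<in> A l'"
        using \<alpha>_in[OF el(1,2)] \<alpha>_in[OF el(3,4)] eq by simp_all
      ultimately show False by blast
    qed
    then show "e = e' \<and> l = l'"
      using G[of l] el eq unfolding \<alpha>_def bij_betw_def inj_on_def by blast
  qed
  with \<alpha>_in show ?thesis by blast
qed

lemma ecf_family_countable_subsets:
  assumes "infinite K"
  shows "ecf_family L K {a. a \<subseteq> L \<and> countable a \<and> infinite a}"
  unfolding ecf_family_def
proof (intro conjI allI impI)
  fix A assume A: "A \<subseteq> L \<and> |A| =o |K|"
  then have "infinite A"
    using assms card_of_ordIso_finite by blast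
  then obtain a where "a \<subseteq> A" "countable a" "infinite a"
    using infinite_countable_subset' by blast
  with A show "\<exists>a\<in>{a. a \<subseteq> L \<and> countable a \<and> infinite a}. infinite (A \<inter> a)"
    by (metis (no_types, lifting) Int_absorb1 mem_Collect_eq subset_trans)
qed simp

lemma ecf_family_card_ge:
  assumes ecf: "ecf_family L K P" and "uncountable K" and KL: "|K| \<le>o |L|"
  shows "|L| \<le>o |P|"
proof (rule ccontr)
  assume "\<not> |L| \<le>o |P|"
  then have PL: "|P| <o |L|"
    using not_ordLeq_iff_ordLess[OF card_of_Well_order card_of_Well_order] by blast
  have natL: "|UNIV :: nat set| <o |L|"
    using assms uncountable_card_of_mono uncountable_iff_card_of_nat_less by blast
  then have infL: "infinite L"
    using countable_finite uncountable_iff_card_of_nat_less by blast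
  have countable_members: "\<forall>a\<in>P. countable a"
    using ecf unfolding ecf_family_def by blast
  have Union_less: "|\<Union>P| <o |L|"
  proof (cases "finite P")
    case True
    then have "countable (\<Union>P)"
      using countable_UN[of P id] countable_members by (simp add: countable_finite)
    then have "|\<Union>P| \<le>o |UNIV :: nat set|"
      by (simp only: countable_card_of_nat)
    then show ?thesis using natL ordLeq_ordLess_trans by blast
  next
    case False
    have "|a| \<le>o |P|" if "a \<in> P" for a
    proof -
      have "|a| \<le>o |UNIV :: nat set|"
        using countable_members that by (simp add: countable_card_of_nat)
      moreover have "|UNIV :: nat set| \<le>o |P|"
        using False by (simp add: infinite_iff_card_of_nat)
      ultimately show ?thesis by (rule ordLeq_transitive)
    qed
    then have "|\<Union>P| \<le>o |P|"
      using card_of_UNION_ordLeq_infinite[OF False, of P id] card_of_refl ordIso_imp_ordLeq by auto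
    then show ?thesis using PL ordLeq_ordLess_trans by blast
  qed
  have "\<not> |L - \<Union>P| <o |L|"
  proof
    assume "|L - \<Union>P| <o |L|"
    then have "|(L - \<Union>P) \<union> \<Union>P| <o |L|"
      by (rule card_of_Un_ordLess_infinite[OF infL _ Union_less])
    moreover have "|L| \<le>o |(L - \<Union>P) \<union> \<Union>P|"
      by (rule card_of_mono1) blast
    ultimately show False
      using not_ordLess_ordLeq by metis
  qed
  then have "|K| \<le>o |L - \<Union>P|"
    using KL ordLeq_transitive not_ordLess_iff_ordLeq[OF card_of_Well_order card_of_Well_order]
    by metis
  then obtain g where g: "inj_on g K" "g ` K \<subseteq> L - \<Union>P"
    by (metis card_of_ordLeq)
  then have "|g ` K| =o |K|" "g ` K \<subseteq> L"
    using card_of_image_inj_on by auto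
  then obtain a where "a \<in> P" "infinite (g ` K \<inter> a)"
    using ecf unfolding ecf_family_def by metis
  moreover have "g ` K \<inter> a = {}" using g \<open>a \<in> P\<close> by blast
  ultimately show False by simp
qed

lemma ecf_family_hits_injective_image:
  assumes ecf: "ecf_family L K P" and "inj_on h S" "h ` S \<subseteq> L" "|S| =o |K|"
  shows "\<exists>a\<in>P. infinite {e\<in>S. h e \<in> a}"
proof -
  have "|h ` S| =o |K|"
    using card_of_image_inj_on[OF assms(2)] assms(4) by (rule ordIso_transitive)
  then obtain a where "a \<in> P" "infinite (h ` S \<inter> a)"
    using ecf assms(3) unfolding ecf_family_def by blast
  moreover have "h ` S \<inter> a = h ` {e\<in>S. h e \<in> a}" by blast
  ultimately show ?thesis by auto
qed

lemma ecf_family_dom_image: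
  assumes b: "b_family L K k F" and "infinite K" and "k \<ge> 1"
  shows "ecf_family L K (dom ` F)"
  unfolding ecf_family_def
proof (intro conjI allI impI)
  show "\<forall>a\<in>dom ` F. a \<subseteq> L \<and> countable a \<and> infinite a"
    using b unfolding b_family_def partial_count_fun_def by auto
  fix A assume A: "A \<subseteq> L \<and> |A| =o |K|"
  obtain B :: "nat \<Rightarrow> 'a set" where B: "\<And>l. B l \<subseteq> A" "\<And>l. |B l| =o |K|" "\<And>l m. l \<noteq> m \<Longrightarrow> B l \<inter> B m = {}"
    using exists_disjoint_copies[OF \<open>infinite K\<close> conjunct2[OF A]] by metis
  have "\<forall>l<k. B l \<subseteq> L \<and> |B l| =o |K|"
    using A B(1,2) by auto
  moreover have "\<forall>l<k. \<forall>m<k. l \<noteq> m \<longrightarrow> B l \<inter> B m = {}"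
    using B(3) by simp
  ultimately obtain f where "f \<in> F" "\<forall>l<k. infinite ({x. f x = Some l} \<inter> B l)"
    using b unfolding b_family_def by metis
  then have "infinite ({x. f x = Some 0} \<inter> B 0)"
    using \<open>k \<ge> 1\<close> by simp
  moreover have "{x. f x = Some 0} \<inter> B 0 \<subseteq> A \<inter> dom f"
    using B by blast
  ultimately show "\<exists>a\<in>dom ` F. infinite (A \<inter> a)"
    using \<open>f \<in> F\<close> finite_subset by blast
qed

lemma b_family_of_c_family:
  assumes c: "c_family L K k F"
  shows "b_family L K k {f\<in>F. \<forall>l<k. infinite {x. f x = Some l}}"
  unfolding b_family_def
proof (intro conjI allI impI)
  show "\<forall>f\<in>{f\<in>F. \<forall>l<k. infinite {x. f x = Some l}}. partial_count_fun L k f"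
    using c unfolding c_family_def by blast
  fix A :: "nat \<Rightarrow> 'a set"
  assume A: "(\<forall>l<k. A l \<subseteq> L \<and> |A l| =o |K| ) \<and> (\<forall>l<k. \<forall>m<k. l \<noteq> m \<longrightarrow> A l \<inter> A m = {})"
  then obtain \<alpha> where \<alpha>: "\<forall>e\<in>K. \<forall>l<k. \<alpha> e l \<in> A l" and \<alpha>_inj: "inj_on (\<lambda>(e, l). \<alpha> e l) (K \<times> {..<k})"
    using exists_inj_array_in_disjoint_sets[of k A K] by blast
  then obtain f where f: "f \<in> F" and E: "infinite {e\<in>K. \<forall>l<k. f (\<alpha> e l) = Some l}"
    using c A unfolding c_family_def by blast
  have "infinite ({x. f x = Some l} \<inter> A l)" if "l < k" for l
  proof -
    let ?E = "{e\<in>K. \<forall>l<k. f (\<alpha> e l) = Some l}"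
    have "inj_on (\<lambda>e. \<alpha> e l) ?E"
      using \<alpha>_inj \<open>l < k\<close> unfolding inj_on_def by fastforce
    then have "infinite ((\<lambda>e. \<alpha> e l) ` ?E)"
      using E finite_imageD by blast
    moreover have "(\<lambda>e. \<alpha> e l) ` ?E \<subseteq> {x. f x = Some l} \<inter> A l"
      using \<alpha> \<open>l < k\<close> by auto
    ultimately show ?thesis using finite_subset by blast
  qed
  with f show "\<exists>f\<in>{f\<in>F. \<forall>l<k. infinite {x. f x = Some l}}. \<forall>l<k. infinite ({x. f x = Some l} \<inter> A l)"
    by auto
qed simp

lemma partial_count_fun_restrict_map:
  assumes "ran g \<subseteq> {..<k}" "countable D" "D \<subseteq> L" "infinite (D \<inter> dom g)"
  shows "partial_count_fun L k (g |` D)"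
proof -
  have "ran (g |` D) \<subseteq> ran g"
    by (auto simp: ran_def restrict_map_def split: if_splits)
  then show ?thesis
    unfolding partial_count_fun_def dom_restrict
    using assms countable_subset[of "dom g \<inter> D" D] by (auto simp: Int_commute)
qed

lemma ecf_family_hits_encoded_tuples:
  assumes ecf: "ecf_family L K P"
    and enc: "inj_on enc {xs\<in>lists L. length xs = k}" "enc ` {xs\<in>lists L. length xs = k} \<subseteq> L"
    and \<alpha>: "\<forall>e\<in>K. \<forall>l<k. \<alpha> e l \<in> L" "inj_on (\<lambda>(e, l). \<alpha> e l) (K \<times> {..<k})"
    and "k \<ge> 1" and "S \<subseteq> K" "|S| =o |K|"
  shows "\<exists>a\<in>P. infinite {e\<in>S. enc (map (\<alpha> e) [0..<k]) \<in> a}"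
proof (rule ecf_family_hits_injective_image[OF ecf _ _ \<open>|S| =o |K|\<close>])
  have tuple: "map (\<alpha> e) [0..<k] \<in> {xs\<in>lists L. length xs = k}" if "e \<in> S" for e
  proof -
    have "e \<in> K"
      using that \<open>S \<subseteq> K\<close> by blast
    then show ?thesis
      using \<alpha>(1) by auto
  qed
  then show "(\<lambda>e. enc (map (\<alpha> e) [0..<k])) ` S \<subseteq> L"
    using enc(2) by blast
  show "inj_on (\<lambda>e. enc (map (\<alpha> e) [0..<k])) S"
  proof (rule inj_onI)
    fix e e' assume "e \<in> S" "e' \<in> S" "enc (map (\<alpha> e) [0..<k]) = enc (map (\<alpha> e') [0..<k])"
    then have "map (\<alpha> e) [0..<k] = map (\<alpha> e') [0..<k]"
      using inj_onD[OF enc(1)] tuple by blast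
    then have "\<alpha> e 0 = \<alpha> e' 0"
      using \<open>k \<ge> 1\<close> by (metis map_eq_conv atLeastLessThan_iff less_le_trans set_upt zero_less_one le0)
    then show "e = e'"
      using inj_onD[OF \<alpha>(2), of "(e, 0)" "(e', 0)"] \<open>e \<in> S\<close> \<open>e' \<in> S\<close> \<open>S \<subseteq> K\<close> \<open>k \<ge> 1\<close> by auto
  qed
qed

lemma ecf_family_tuple_supports:
  fixes L :: "'a set" and K :: "'b set" and k :: nat
  assumes ecf: "ecf_family L K P" and "infinite L" and "k \<ge> 1"
  obtains D :: "'a set \<Rightarrow> 'a set"
  where "\<And>a. D a \<subseteq> L" and "\<And>a. a \<in> P \<Longrightarrow> countable (D a)"
    and "\<And>\<alpha> S. \<forall>e\<in>K. \<forall>l<k. \<alpha> e l \<in> L \<Longrightarrow> inj_on (\<lambda>(e, l). \<alpha> e l) (K \<times> {..<k}) \<Longrightarrow>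
           S \<subseteq> K \<Longrightarrow> |S| =o |K| \<Longrightarrow> \<exists>a\<in>P. infinite {e\<in>S. \<forall>l<k. \<alpha> e l \<in> D a}"
proof -
  define T where "T = {xs\<in>lists L. length xs = k}"
  obtain enc where enc: "inj_on enc T" "enc ` T \<subseteq> L"
    using exists_inj_on_lists_of_length[OF \<open>infinite L\<close>] unfolding T_def by blast
  define D where "D a = (\<Union>xs\<in>{xs\<in>T. enc xs \<in> a}. set xs)" for a
  have D_L: "D a \<subseteq> L" for a
    unfolding D_def T_def by auto
  have D_countable: "countable (D a)" if "a \<in> P" for a
  proof -
    have "countable a"
      using ecf that unfolding ecf_family_def by blast
    moreover have "inj_on enc {xs\<in>T. enc xs \<in> a}"
      using enc(1) by (rule inj_on_subset) blast
    ultimately have "countable {xs\<in>T. enc xs \<in> a}"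
      by (metis (no_types, lifting) countable_image_inj_on countable_subset image_subset_iff mem_Collect_eq)
    then show ?thesis
      unfolding D_def by (rule countable_UN) (simp add: countable_finite)
  qed
  have D_hits: "\<exists>a\<in>P. infinite {e\<in>S. \<forall>l<k. \<alpha> e l \<in> D a}"
    if \<alpha>: "\<forall>e\<in>K. \<forall>l<k. \<alpha> e l \<in> L" "inj_on (\<lambda>(e, l). \<alpha> e l) (K \<times> {..<k})"
      and S: "S \<subseteq> K" "|S| =o |K|" for \<alpha> S
  proof -
    obtain a where "a \<in> P" and "infinite {e\<in>S. enc (map (\<alpha> e) [0..<k]) \<in> a}"
      using ecf_family_hits_encoded_tuples[OF ecf enc[unfolded T_def] \<alpha> \<open>k \<ge> 1\<close> S] by blast
    moreover have "{e\<in>S. enc (map (\<alpha> e) [0..<k]) \<in> a} \<subseteq> {e\<in>S. \<forall>l<k. \<alpha> e l \<in> D a}"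
    proof (rule subsetI)
      fix e assume e: "e \<in> {e\<in>S. enc (map (\<alpha> e) [0..<k]) \<in> a}"
      then have "e \<in> K"
        using S(1) by blast
      then have "map (\<alpha> e) [0..<k] \<in> {xs\<in>T. enc xs \<in> a}"
        using e \<alpha>(1) unfolding T_def by auto
      then have "\<forall>l<k. \<alpha> e l \<in> D a"
        unfolding D_def by force
      with e show "e \<in> {e\<in>S. \<forall>l<k. \<alpha> e l \<in> D a}"
        by blast
    qed
    ultimately show ?thesis
      using finite_subset by blast
  qed
  show thesis
    by (rule that[OF D_L D_countable D_hits])
qed

lemma c_family_restricted_colourings:
  fixes \<Gamma> :: "('a \<Rightarrow> nat option) set" and L :: "'a set" and K :: "'b set"
  assumes "k \<ge> 1"
    and ran: "\<And>g. g \<in> \<Gamma> \<Longrightarrow> ran g \<subseteq> {..<k}"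
    and colour: "\<And>\<alpha>. \<forall>e\<in>K. \<forall>l<k. \<alpha> e l \<in> L \<Longrightarrow> inj_on (\<lambda>(e, l). \<alpha> e l) (K \<times> {..<k}) \<Longrightarrow>
        \<exists>g\<in>\<Gamma>. \<exists>S\<subseteq>K. |S| =o |K| \<and> (\<forall>e\<in>S. \<forall>l<k. g (\<alpha> e l) = Some l)"
    and D_L: "\<And>a. D a \<subseteq> L" and D_countable: "\<And>a. a \<in> P \<Longrightarrow> countable (D a)"
    and D_hits: "\<And>\<alpha> S. \<forall>e\<in>K. \<forall>l<k. \<alpha> e l \<in> L \<Longrightarrow> inj_on (\<lambda>(e, l). \<alpha> e l) (K \<times> {..<k}) \<Longrightarrow>
           S \<subseteq> K \<Longrightarrow> |S| =o |K| \<Longrightarrow> \<exists>a\<in>P. infinite {e\<in>S. \<forall>l<k. \<alpha> e l \<in> D a}"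
  shows "c_family L K k {f. partial_count_fun L k f \<and> (\<exists>a\<in>P. \<exists>g\<in>\<Gamma>. f = g |` D a)}"
    (is "c_family L K k ?F")
  unfolding c_family_def
proof (intro conjI allI impI)
  show "\<forall>f\<in>?F. partial_count_fun L k f"
    by blast
  fix \<alpha> :: "'b \<Rightarrow> nat \<Rightarrow> 'a"
  assume "(\<forall>e\<in>K. \<forall>l<k. \<alpha> e l \<in> L) \<and> inj_on (\<lambda>(e, l). \<alpha> e l) (K \<times> {..<k})"
  then have \<alpha>: "\<forall>e\<in>K. \<forall>l<k. \<alpha> e l \<in> L" "inj_on (\<lambda>(e, l). \<alpha> e l) (K \<times> {..<k})"
    by auto
  obtain g S where g: "g \<in> \<Gamma>" "S \<subseteq> K" "|S| =o |K|" "\<forall>e\<in>S. \<forall>l<k. g (\<alpha> e l) = Some l"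
    using colour[OF \<alpha>] by metis
  obtain a where "a \<in> P" and "infinite {e\<in>S. \<forall>l<k. \<alpha> e l \<in> D a}"
    using D_hits[OF \<alpha> g(2,3)] by blast
  define H where "H = {e\<in>S. \<forall>l<k. \<alpha> e l \<in> D a}"
  have "infinite H"
    unfolding H_def by fact
  have "(\<lambda>e. \<alpha> e 0) ` H \<subseteq> D a \<inter> dom g"
    using g(4) \<open>k \<ge> 1\<close> unfolding H_def by auto
  moreover have "inj_on (\<lambda>e. \<alpha> e 0) H"
    using \<alpha>(2) g(2) \<open>k \<ge> 1\<close> unfolding H_def inj_on_def by fastforce
  ultimately have "infinite (D a \<inter> dom g)"
    using \<open>infinite H\<close> finite_imageD finite_subset by metis
  then have "g |` D a \<in> ?F"
    using partial_count_fun_restrict_map[OF ran[OF g(1)] D_countable[OF \<open>a \<in> P\<close>] D_L]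
      \<open>a \<in> P\<close> g(1) by blast
  moreover have "H \<subseteq> {e\<in>K. \<forall>l<k. (g |` D a) (\<alpha> e l) = Some l}"
    using g(2,4) unfolding H_def by auto
  then have "infinite {e\<in>K. \<forall>l<k. (g |` D a) (\<alpha> e l) = Some l}"
    using \<open>infinite H\<close> finite_subset by blast
  ultimately show "\<exists>f\<in>?F. infinite {e\<in>K. \<forall>l<k. f (\<alpha> e l) = Some l}"
    by blast
qed

lemma c_family_from_colourings:
  fixes \<Gamma> :: "('a \<Rightarrow> nat option) set" and L :: "'a set" and K :: "'b set"
  assumes ecf: "ecf_family L K P" and "infinite P" and "infinite L" and "k \<ge> 1"
    and ran: "\<And>g. g \<in> \<Gamma> \<Longrightarrow> ran g \<subseteq> {..<k}"
    and colour: "\<And>\<alpha>. \<forall>e\<in>K. \<forall>l<k. \<alpha> e l \<in> L \<Longrightarrow> inj_on (\<lambda>(e, l). \<alpha> e l) (K \<times> {..<k}) \<Longrightarrow>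
        \<exists>g\<in>\<Gamma>. \<exists>S\<subseteq>K. |S| =o |K| \<and> (\<forall>e\<in>S. \<forall>l<k. g (\<alpha> e l) = Some l)"
    and small: "\<And>D. countable D \<Longrightarrow> |(\<lambda>g. g |` D) ` \<Gamma>| \<le>o |P|"
  shows "\<exists>F. c_family L K k F \<and> |F| \<le>o |P|"
proof (rule ecf_family_tuple_supports[OF ecf \<open>infinite L\<close> \<open>k \<ge> 1\<close>])
  fix D :: "'a set \<Rightarrow> 'a set"
  assume D_L: "\<And>a. D a \<subseteq> L" and D_countable: "\<And>a. a \<in> P \<Longrightarrow> countable (D a)"
    and D_hits: "\<And>\<alpha> S. \<forall>e\<in>K. \<forall>l<k. \<alpha> e l \<in> L \<Longrightarrow> inj_on (\<lambda>(e, l). \<alpha> e l) (K \<times> {..<k}) \<Longrightarrow>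
           S \<subseteq> K \<Longrightarrow> |S| =o |K| \<Longrightarrow> \<exists>a\<in>P. infinite {e\<in>S. \<forall>l<k. \<alpha> e l \<in> D a}"
  define F where "F = {f. partial_count_fun L k f \<and> (\<exists>a\<in>P. \<exists>g\<in>\<Gamma>. f = g |` D a)}"
  have "F \<subseteq> (\<Union>a\<in>P. (\<lambda>g. g |` D a) ` \<Gamma>)"
    unfolding F_def by blast
  moreover have "|\<Union>a\<in>P. (\<lambda>g. g |` D a) ` \<Gamma>| \<le>o |P|"
    by (rule card_of_UNION_ordLeq_infinite[OF \<open>infinite P\<close> ordLeq_refl[OF card_of_Card_order]])
      (simp add: small D_countable)
  ultimately have "|F| \<le>o |P|"
    using card_of_mono1 ordLeq_transitive by metis
  moreover have "c_family L K k F"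
    unfolding F_def using \<open>k \<ge> 1\<close> ran colour D_L D_countable D_hits
    by (rule c_family_restricted_colourings)
  ultimately show ?thesis by blast
qed

definition nat_set_prefix :: "nat \<Rightarrow> nat set \<Rightarrow> bool list" where
  "nat_set_prefix n A = map (\<lambda>i. i \<in> A) [0..<n]"

lemma eventually_nat_set_prefix_neq:
  assumes "A \<noteq> B"
  shows "eventually (\<lambda>n. nat_set_prefix n A \<noteq> nat_set_prefix n B) sequentially"
proof -
  obtain i where i: "(i \<in> A) \<noteq> (i \<in> B)"
    using assms by blast
  show ?thesis
  proof (rule eventually_sequentiallyI[of "Suc i"])
    fix n assume "Suc i \<le> n"
    then have "nat_set_prefix n A ! i \<noteq> nat_set_prefix n B ! i"
      using i by (simp add: nat_set_prefix_def)
    then show "nat_set_prefix n A \<noteq> nat_set_prefix n B"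
      by metis
  qed
qed

lemma finite_inj_on_nat_set_prefix:
  assumes "finite X"
  shows "\<exists>n. inj_on (nat_set_prefix n) X"
proof -
  define Q where "Q = {(A, B) \<in> X \<times> X. A \<noteq> B}"
  have "finite Q"
    unfolding Q_def using assms by (auto intro: finite_subset[of _ "X \<times> X"])
  moreover have "\<forall>p\<in>Q. eventually (\<lambda>n. nat_set_prefix n (fst p) \<noteq> nat_set_prefix n (snd p)) sequentially"
    unfolding Q_def using eventually_nat_set_prefix_neq by auto
  ultimately have "eventually (\<lambda>n. \<forall>p\<in>Q. nat_set_prefix n (fst p) \<noteq> nat_set_prefix n (snd p)) sequentially"
    by (rule eventually_ball_finite)
  then obtain n where "\<forall>m\<ge>n. \<forall>p\<in>Q. nat_set_prefix m (fst p) \<noteq> nat_set_prefix m (snd p)"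
    unfolding eventually_sequentially ..
  then have "\<forall>p\<in>Q. nat_set_prefix n (fst p) \<noteq> nat_set_prefix n (snd p)"
    by simp
  then have "inj_on (nat_set_prefix n) X"
    unfolding Q_def by (auto intro!: inj_onI)
  then show ?thesis ..
qed

(* map_of picks the first l such that ss ! l is the n-bit prefix of phi x. *)
definition prefix_colouring :: "('a \<Rightarrow> nat set) \<Rightarrow> nat \<Rightarrow> bool list list \<Rightarrow> 'a \<Rightarrow> nat option" where
  "prefix_colouring \<phi> n ss x = map_of (zip ss [0..<length ss]) (nat_set_prefix n (\<phi> x))"

lemma ran_prefix_colouring: "ran (prefix_colouring \<phi> n ss) \<subseteq> {..<length ss}"
  unfolding prefix_colouring_def ran_def
  by (auto dest!: map_of_SomeD set_zip_rightD)

lemma prefix_colouring_colours_array: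
  assumes reg: "regularCard |K|" and unc: "uncountable K" and \<phi>: "inj_on \<phi> L"
    and \<alpha>: "\<forall>e\<in>K. \<forall>l<k. \<alpha> e l \<in> L" "inj_on (\<lambda>(e, l). \<alpha> e l) (K \<times> {..<k})"
  shows "\<exists>g\<in>(\<lambda>(n, ss). prefix_colouring \<phi> n ss) ` {(n, ss). length ss = k}.
           \<exists>S\<subseteq>K. |S| =o |K| \<and> (\<forall>e\<in>S. \<forall>l<k. g (\<alpha> e l) = Some l)"
proof -
  define code where "code n e = map (\<lambda>l. nat_set_prefix n (\<phi> (\<alpha> e l))) [0..<k]" for n e
  have "\<exists>n. distinct (code n e)" if "e \<in> K" for e
  proof -
    have "inj_on (\<lambda>l. \<phi> (\<alpha> e l)) {0..<k}"
      using \<alpha> \<phi> that unfolding inj_on_def by fastforce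
    moreover obtain n where "inj_on (nat_set_prefix n) ((\<lambda>l. \<phi> (\<alpha> e l)) ` {0..<k})"
      using finite_inj_on_nat_set_prefix by blast
    ultimately have "inj_on (\<lambda>l. nat_set_prefix n (\<phi> (\<alpha> e l))) {0..<k}"
      using comp_inj_on[of _ "{0..<k}" "nat_set_prefix n"] by (simp add: comp_def)
    then show ?thesis
      unfolding code_def by (auto simp: distinct_map)
  qed
  then obtain N where N: "\<And>e. e \<in> K \<Longrightarrow> distinct (code (N e) e)"
    by metis
  have "\<exists>c. |{e\<in>K. (N e, code (N e) e) = c}| =o |K|"
    by (rule regularCard_pigeonhole[OF reg unc])
  then obtain c where c: "|{e\<in>K. (N e, code (N e) e) = c}| =o |K|" ..
  obtain n ss where "c = (n, ss)"
    by (cases c)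
  define S where "S = {e\<in>K. (N e, code (N e) e) = c}"
  have S: "S \<subseteq> K" "|S| =o |K|"
    using c unfolding S_def by auto
  have S_code: "N e = n" "code n e = ss" if "e \<in> S" for e
    using that \<open>c = (n, ss)\<close> unfolding S_def by auto
  have "infinite S"
    using S(2) card_of_ordIso_finite unc countable_finite by blast
  then obtain e0 where "e0 \<in> S"
    by (metis finite.emptyI ex_in_conv)
  then have ss: "distinct ss" "length ss = k"
    using N[of e0] S_code[of e0] S(1) unfolding code_def by auto
  have "prefix_colouring \<phi> n ss (\<alpha> e l) = Some l" if "e \<in> S" "l < k" for e l
  proof -
    have "nat_set_prefix n (\<phi> (\<alpha> e l)) = code n e ! l"
      unfolding code_def using \<open>l < k\<close> by simp
    then have "nat_set_prefix n (\<phi> (\<alpha> e l)) = ss ! l"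
      using S_code(2)[OF \<open>e \<in> S\<close>] by simp
    then show ?thesis
      unfolding prefix_colouring_def using map_of_zip_nth[of ss "[0..<k]" l] ss \<open>l < k\<close> by simp
  qed
  with S ss(2) show ?thesis by blast
qed

lemma exists_colouring_of_inj_array:
  assumes "inj_on (\<lambda>(e, l). \<alpha> e l) (K \<times> {..<k})"
  shows "\<exists>g. ran g \<subseteq> {..<k} \<and> (\<forall>e\<in>K. \<forall>l<k. g (\<alpha> e l) = Some l)"
proof -
  let ?a = "\<lambda>(e, l). \<alpha> e l"
  define g where "g x = (if x \<in> ?a ` (K \<times> {..<k}) then Some (snd (the_inv_into (K \<times> {..<k}) ?a x)) else None)"
    for x
  have "ran g \<subseteq> {..<k}"
  proof
    fix l assume "l \<in> ran g"
    then obtain x where "x \<in> ?a ` (K \<times> {..<k})" "l = snd (the_inv_into (K \<times> {..<k}) ?a x)"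
      unfolding g_def ran_def by (auto split: if_splits)
    then show "l \<in> {..<k}"
      using the_inv_into_into[OF assms, of x "K \<times> {..<k}"] by (auto simp: mem_Times_iff)
  qed
  moreover have "g (\<alpha> e l) = Some l" if "e \<in> K" "l < k" for e l
    using the_inv_into_f_f[OF assms, of "(e, l)"] that unfolding g_def by force
  ultimately show ?thesis by blast
qed

lemma exists_c_family_card_le_ecf_family_prefix_colourings:
  fixes L :: "'a set" and K :: "'b set" and \<phi> :: "'a \<Rightarrow> nat set"
  assumes ecf: "ecf_family L K P" and "infinite P" and "infinite L" and "k \<ge> 1"
    and reg: "regularCard |K|" and unc: "uncountable K" and \<phi>: "inj_on \<phi> L"
  shows "\<exists>F. c_family L K k F \<and> |F| \<le>o |P|"
proof -
  let ?\<Gamma> = "(\<lambda>(n, ss). prefix_colouring \<phi> n ss) ` {(n, ss). length ss = k}"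
  show ?thesis
  proof (rule c_family_from_colourings[OF ecf \<open>infinite P\<close> \<open>infinite L\<close> \<open>k \<ge> 1\<close>, of ?\<Gamma>])
    show "ran g \<subseteq> {..<k}" if "g \<in> ?\<Gamma>" for g
      using that ran_prefix_colouring by fastforce
    show "\<exists>g\<in>?\<Gamma>. \<exists>S\<subseteq>K. |S| =o |K| \<and> (\<forall>e\<in>S. \<forall>l<k. g (\<alpha> e l) = Some l)"
      if "\<forall>e\<in>K. \<forall>l<k. \<alpha> e l \<in> L" "inj_on (\<lambda>(e, l). \<alpha> e l) (K \<times> {..<k})" for \<alpha>
      by (rule prefix_colouring_colours_array[OF reg unc \<phi> that])
    show "|(\<lambda>g. g |` D) ` ?\<Gamma>| \<le>o |P|" for D :: "'a set"
    proof -
      have "|(\<lambda>g. g |` D) ` ?\<Gamma>| \<le>o |UNIV :: nat set|"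
        by (simp add: countable_card_of_nat[symmetric])
      moreover have "|UNIV :: nat set| \<le>o |P|"
        using \<open>infinite P\<close> infinite_iff_card_of_nat by blast
      ultimately show ?thesis
        by (rule ordLeq_transitive)
    qed
  qed
qed

lemma exists_c_family_card_le_ecf_family_all_colourings:
  fixes L :: "'a set" and K :: "'b set"
  assumes ecf: "ecf_family L K P" and "infinite P" and "infinite L" and "k \<ge> 1"
    and Pow_nat_P: "|UNIV :: nat set set| \<le>o |P|"
  shows "\<exists>F. c_family L K k F \<and> |F| \<le>o |P|"
proof -
  let ?\<Gamma> = "{g :: 'a \<Rightarrow> nat option. ran g \<subseteq> {..<k}}"
  show ?thesis
  proof (rule c_family_from_colourings[OF ecf \<open>infinite P\<close> \<open>infinite L\<close> \<open>k \<ge> 1\<close>, of ?\<Gamma>])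
    show "ran g \<subseteq> {..<k}" if "g \<in> ?\<Gamma>" for g
      using that by simp
    show "\<exists>g\<in>?\<Gamma>. \<exists>S\<subseteq>K. |S| =o |K| \<and> (\<forall>e\<in>S. \<forall>l<k. g (\<alpha> e l) = Some l)"
      if "inj_on (\<lambda>(e, l). \<alpha> e l) (K \<times> {..<k})" for \<alpha>
      using exists_colouring_of_inj_array[OF that] ordIso_refl[OF card_of_Card_order, of K] by blast
    show "|(\<lambda>g. g |` D) ` ?\<Gamma>| \<le>o |P|" if "countable D" for D :: "'a set"
    proof -
      have "(\<lambda>g. g |` D) ` ?\<Gamma> \<subseteq> {f :: 'a \<Rightarrow> nat option. dom f \<subseteq> D}"
        by (auto simp: restrict_map_def split: if_splits)
      then show ?thesis
        using card_of_maps_with_countable_dom[OF that] Pow_nat_P card_of_mono1 ordLeq_transitive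
        by metis
    qed
  qed
qed

lemma exists_c_family_card_le_ecf_family:
  fixes L :: "'a set" and K :: "'b set"
  assumes ecf: "ecf_family L K P" and reg: "regularCard |K|" and unc: "uncountable K"
    and KL: "|K| \<le>o |L|" and "k \<ge> 1"
  shows "\<exists>F. c_family L K k F \<and> |F| \<le>o |P|"
proof -
  have LP: "|L| \<le>o |P|"
    using ecf_family_card_ge[OF ecf unc KL] .
  have "infinite L"
    using uncountable_card_of_mono[OF unc KL] countable_finite by blast
  then have "infinite P"
    using LP card_of_ordLeq_finite by blast
  show ?thesis
  proof (cases "|L| \<le>o |UNIV :: nat set set|")
    case True
    then obtain \<phi> :: "'a \<Rightarrow> nat set" where "inj_on \<phi> L"
      by (metis card_of_ordLeq)
    then show ?thesis
      using exists_c_family_card_le_ecf_family_prefix_colourings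
        ecf \<open>infinite P\<close> \<open>infinite L\<close> \<open>k \<ge> 1\<close> reg unc by blast
  next
    case False
    then have "|UNIV :: nat set set| \<le>o |P|"
      using LP ordLeq_transitive ordLess_imp_ordLeq
        not_ordLeq_iff_ordLess[OF card_of_Well_order card_of_Well_order] by metis
    then show ?thesis
      using exists_c_family_card_le_ecf_family_all_colourings
        ecf \<open>infinite P\<close> \<open>infinite L\<close> \<open>k \<ge> 1\<close> by blast
  qed
qed

theorem claim4p13:
  fixes L :: "'a set" and K :: "'b set" and k :: nat
  assumes "regularCard |K|" and "uncountable K" and "|K| \<le>o |L|" and "k \<ge> 1"
  shows "\<exists>r :: ('a set \<times> 'a set) set.
           mincard_is {P. ecf_family L K P} r \<and>
           mincard_is {F. b_family L K k F} r \<and>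
           mincard_is {F. c_family L K k F} r"
proof -
  have "infinite K"
    using assms(2) countable_finite by blast
  obtain P where P: "ecf_family L K P" and P_min: "\<And>P'. ecf_family L K P' \<Longrightarrow> |P| \<le>o |P'|"
    using exists_card_of_minimal[of "{P. ecf_family L K P}"] ecf_family_countable_subsets[OF \<open>infinite K\<close>]
    by blast
  obtain Fc where Fc: "c_family L K k Fc" "|Fc| \<le>o |P|"
    using exists_c_family_card_le_ecf_family[OF P assms] by blast
  define Fb where "Fb = {f\<in>Fc. \<forall>l<k. infinite {x. f x = Some l}}"
  have Fb: "b_family L K k Fb" "|Fb| \<le>o |P|"
    using b_family_of_c_family[OF Fc(1)] Fc(2) card_of_mono1[of Fb Fc] ordLeq_transitive
    unfolding Fb_def by auto
  have b_min: "|P| \<le>o |F|" if "b_family L K k F" for F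
    using P_min[OF ecf_family_dom_image[OF that \<open>infinite K\<close> assms(4)]] card_of_image ordLeq_transitive
    by blast
  have c_min: "|P| \<le>o |F|" if "c_family L K k F" for F
    using b_min[OF b_family_of_c_family[OF that]] card_of_mono1 ordLeq_transitive
    by (metis (no_types, lifting) mem_Collect_eq subsetI)
  have "mincard_is {P. ecf_family L K P} |P|"
    using P P_min by (intro mincard_isI[of P]) (auto intro: ordLeq_refl card_of_Card_order)
  moreover have "mincard_is {F. b_family L K k F} |P|"
    using Fb b_min by (intro mincard_isI[of Fb]) auto
  moreover have "mincard_is {F. c_family L K k F} |P|"
    using Fc c_min by (intro mincard_isI[of Fc]) auto
  ultimately show ?thesis by blast
qed

end
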